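(* Let $G=(V,E)$ be an undirected graph, $f,g:V\to\mathbb{Z}$ with $f\le g$, suppose $G$ admits an $(f,g)$-bounded orientation, and let $T\subseteq V$. Then there exist functions $f',g':V\to\mathbb{Z}$ with $f\le f'\le g'\le g$ and a subset $X_T\subseteq V$ such that an $(f,g)$-bounded orientation $D$ of $G$ minimizes the in-degree $\varrho_D(T)$ of $T$ (among all $(f,g)$-bounded orientations of $G$) if and only if $D$ is an $(f',g')$-bounded orientation with $\varrho_D(X_T)=0$.
   Context: $\varrho_D(v)$ is the number of arcs with head $v$; $\varrho_D(X)$ is the number of arcs with head in $X$ and tail in $V-X$. An orientation is $(f,g)$-bounded if $f(v)\le\varrho_D(v)\le g(v)$ for all $v\in V$. *)

theory Defs
  imports Main
begin

text \<open>An undirected (multi)graph is given by a finite vertex set V, a finite edge set E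
and an endpoint map ends :: 'e => 'v * 'v. An orientation is a map D :: 'e => bool:
D e = True orients e from fst (ends e) to snd (ends e), D e = False the other way.\<close>

definition head :: "('e \<Rightarrow> 'v \<times> 'v) \<Rightarrow> ('e \<Rightarrow> bool) \<Rightarrow> 'e \<Rightarrow> 'v" where
  "head ends D e = (if D e then snd (ends e) else fst (ends e))"

definition tail :: "('e \<Rightarrow> 'v \<times> 'v) \<Rightarrow> ('e \<Rightarrow> bool) \<Rightarrow> 'e \<Rightarrow> 'v" where
  "tail ends D e = (if D e then fst (ends e) else snd (ends e))"

definition indeg :: "'e set \<Rightarrow> ('e \<Rightarrow> 'v \<times> 'v) \<Rightarrow> ('e \<Rightarrow> bool) \<Rightarrow> 'v \<Rightarrow> nat" where
  "indeg E ends D v = card {e \<in> E. head ends D e = v}"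

definition indeg_set :: "'v set \<Rightarrow> 'e set \<Rightarrow> ('e \<Rightarrow> 'v \<times> 'v) \<Rightarrow> ('e \<Rightarrow> bool) \<Rightarrow> 'v set \<Rightarrow> nat" where
  "indeg_set V E ends D X = card {e \<in> E. head ends D e \<in> X \<and> tail ends D e \<in> V - X}"

definition bounded_orientation ::
  "'v set \<Rightarrow> 'e set \<Rightarrow> ('e \<Rightarrow> 'v \<times> 'v) \<Rightarrow> ('v \<Rightarrow> int) \<Rightarrow> ('v \<Rightarrow> int) \<Rightarrow> ('e \<Rightarrow> bool) \<Rightarrow> bool" where
  "bounded_orientation V E ends f g D \<longleftrightarrow>
     (\<forall>v\<in>V. f v \<le> int (indeg E ends D v) \<and> int (indeg E ends D v) \<le> g v)"

end

theory Submission
  imports Defs "HOL-Library.Transitive_Closure_Table"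
begin

(* Take an orientation D0 minimizing \<rho>(T), let A be the vertices t \<in> T with \<rho>_D0(t) > f t, and let
   X_T be the set of vertices from which A can be reached in D0. No arc of D0 enters X_T, vertices
   of T - X_T have in-degree f, and vertices of X_T - T have in-degree g, for otherwise reversing
   a path from such a vertex into A would decrease \<rho>(T). Counting the edges inside T and inside
   X_T shows that \<rho>_D(T) minus the slack
     \<rho>_D(X_T) + \<Sum>_{X_T - T} (g - \<rho>_D) + \<Sum>_{T - X_T} (\<rho>_D - f)
   is the same for every orientation D. The slack is nonnegative for (f,g)-bounded D and zero for
   D0, so the minimizers are exactly the (f,g)-bounded D with zero slack, i.e. the orientations
   that are bounded by f' = g on X_T - T and g' = f on T - X_T and satisfy \<rho>_D(X_T) = 0. *)

definition arc :: "'e set \<Rightarrow> ('e \<Rightarrow> 'v \<times> 'v) \<Rightarrow> ('e \<Rightarrow> bool) \<Rightarrow> 'v \<Rightarrow> 'v \<Rightarrow> bool" where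
  "arc E ends D u w \<longleftrightarrow> (\<exists>e\<in>E. tail ends D e = u \<and> head ends D e = w)"

definition edges_within :: "'e set \<Rightarrow> ('e \<Rightarrow> 'v \<times> 'v) \<Rightarrow> 'v set \<Rightarrow> 'e set" where
  "edges_within E ends X = {e\<in>E. fst (ends e) \<in> X \<and> snd (ends e) \<in> X}"

definition min_indeg_orientation :: "'v set \<Rightarrow> 'e set \<Rightarrow> ('e \<Rightarrow> 'v \<times> 'v) \<Rightarrow> ('v \<Rightarrow> int) \<Rightarrow> ('v \<Rightarrow> int) \<Rightarrow>
    'v set \<Rightarrow> ('e \<Rightarrow> bool) \<Rightarrow> bool"
  where
  "min_indeg_orientation V E ends f g T D \<longleftrightarrow> bounded_orientation V E ends f g D \<and>
     (\<forall>D'. bounded_orientation V E ends f g D' \<longrightarrow> indeg_set V E ends D T \<le> indeg_set V E ends D' T)"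

definition indeg_slack :: "'v set \<Rightarrow> 'e set \<Rightarrow> ('e \<Rightarrow> 'v \<times> 'v) \<Rightarrow> ('v \<Rightarrow> int) \<Rightarrow> ('v \<Rightarrow> int) \<Rightarrow>
    'v set \<Rightarrow> 'v set \<Rightarrow> ('e \<Rightarrow> bool) \<Rightarrow> int"
  where
  "indeg_slack V E ends f g T Z D = int (indeg_set V E ends D Z)
     + (\<Sum>v\<in>Z-T. g v - int (indeg E ends D v)) + (\<Sum>v\<in>T-Z. int (indeg E ends D v) - f v)"

definition tight_lower :: "('v \<Rightarrow> int) \<Rightarrow> ('v \<Rightarrow> int) \<Rightarrow> 'v set \<Rightarrow> 'v set \<Rightarrow> 'v \<Rightarrow> int" where
  "tight_lower f g T Z v = (if v \<in> Z - T then g v else f v)"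

definition tight_upper :: "('v \<Rightarrow> int) \<Rightarrow> ('v \<Rightarrow> int) \<Rightarrow> 'v set \<Rightarrow> 'v set \<Rightarrow> 'v \<Rightarrow> int" where
  "tight_upper f g T Z v = (if v \<in> T - Z then f v else g v)"

lemma indeg_eq_sum:
  "finite E \<Longrightarrow> int (indeg E ends D v) = (\<Sum>e\<in>E. if head ends D e = v then 1 else 0)"
  unfolding indeg_def by (simp add: sum.If_cases Collect_conj_eq)

lemma indeg_reverse_arc:
  assumes "finite E" "e \<in> E" "head ends D e \<noteq> tail ends D e"
  shows "int (indeg E ends (D(e := \<not> D e)) v) =
    int (indeg E ends D v) + of_bool (v = tail ends D e) - of_bool (v = head ends D e)"
proof -
  let ?D = "D(e := \<not> D e)"
  have head_e: "head ends ?D e = tail ends D e" by (simp add: head_def tail_def)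
  have head_other: "head ends ?D e' = head ends D e'" if "e' \<noteq> e" for e'
    using that by (simp add: head_def)
  define rest where "rest = (\<Sum>e'\<in>E-{e}. if head ends D e' = v then 1 else 0 :: int)"
  have "(\<Sum>e'\<in>E-{e}. if head ends ?D e' = v then 1 else 0) = rest"
    unfolding rest_def by (rule sum.cong) (auto simp: head_other)
  then have "int (indeg E ends ?D v) = of_bool (tail ends D e = v) + rest"
    using assms head_e by (simp add: indeg_eq_sum sum.remove del: fun_upd_apply)
  moreover have "int (indeg E ends D v) = of_bool (head ends D e = v) + rest"
    using assms unfolding rest_def by (simp add: indeg_eq_sum sum.remove)
  ultimately show ?thesis using assms(3) by auto
qed

lemma indeg_reverse_simple_path:
  assumes "finite E"
  shows "rtrancl_path (arc E ends D) u xs a \<Longrightarrow> distinct (u # xs) \<Longrightarrow>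
    \<exists>D'. (\<forall>e. tail ends D e \<notin> set (u # xs) \<longrightarrow> D' e = D e) \<and>
      (\<forall>v. int (indeg E ends D' v) = int (indeg E ends D v) + of_bool (v = u) - of_bool (v = a))"
proof (induction rule: rtrancl_path.induct)
  case (base u)
  show ?case by (intro exI[of _ D]) auto
next
  case (step u w ws a)
  then obtain D1 where D1_agrees: "\<forall>e. tail ends D e \<notin> set (w # ws) \<longrightarrow> D1 e = D e"
    and D1_indeg: "\<forall>v. int (indeg E ends D1 v) =
      int (indeg E ends D v) + of_bool (v = w) - of_bool (v = a)"
    by auto
  from step.hyps(1) obtain e where e: "e \<in> E" "tail ends D e = u" "head ends D e = w"
    unfolding arc_def by blast
  have "u \<notin> set (w # ws)" using step.prems by simp
  then have "D1 e = D e" using D1_agrees e(2) by auto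
  then have ends_e: "head ends D1 e = w" "tail ends D1 e = u"
    using e by (auto simp: head_def tail_def)
  have "u \<noteq> w" using \<open>u \<notin> set (w # ws)\<close> by simp
  define D2 where "D2 = D1(e := \<not> D1 e)"
  have "\<forall>v. int (indeg E ends D2 v) = int (indeg E ends D v) + of_bool (v = u) - of_bool (v = a)"
    using indeg_reverse_arc[OF assms e(1), of ends D1] ends_e \<open>u \<noteq> w\<close> D1_indeg
    unfolding D2_def by auto
  moreover have "\<forall>e'. tail ends D e' \<notin> set (u # w # ws) \<longrightarrow> D2 e' = D e'"
    using D1_agrees e(2) unfolding D2_def by auto
  ultimately show ?case by blast
qed

lemma indeg_reverse_path:
  assumes "finite E" "(arc E ends D)\<^sup>*\<^sup>* u a"
  obtains D' where
    "\<And>v. int (indeg E ends D' v) = int (indeg E ends D v) + of_bool (v = u) - of_bool (v = a)"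
proof -
  obtain xs where "rtrancl_path (arc E ends D) u xs a"
    using assms(2) by (auto simp: rtranclp_eq_rtrancl_path)
  then obtain ys where "rtrancl_path (arc E ends D) u ys a" "distinct (u # ys)"
    by (rule rtrancl_path_distinct)
  from indeg_reverse_simple_path[OF assms(1) this] obtain D' where
    "\<forall>v. int (indeg E ends D' v) = int (indeg E ends D v) + of_bool (v = u) - of_bool (v = a)"
    by blast
  then show ?thesis by (metis that)
qed

lemma indeg_set_eq_sum_indeg:
  assumes "finite E" "\<forall>e\<in>E. fst (ends e) \<in> V \<and> snd (ends e) \<in> V" "X \<subseteq> V" "finite X"
  shows "int (indeg_set V E ends D X) =
    (\<Sum>v\<in>X. int (indeg E ends D v)) - int (card (edges_within E ends X))"
proof -
  have "(\<Sum>v\<in>X. indeg E ends D v) = card (\<Union>v\<in>X. {e\<in>E. head ends D e = v})"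
    unfolding indeg_def using assms by (subst card_UN_disjoint) auto
  also have "(\<Union>v\<in>X. {e\<in>E. head ends D e = v}) =
      {e\<in>E. head ends D e \<in> X \<and> tail ends D e \<in> V - X} \<union> edges_within E ends X"
    using assms(2) by (auto simp: head_def tail_def edges_within_def split: if_splits)
  also have "card \<dots> = indeg_set V E ends D X + card (edges_within E ends X)"
    unfolding indeg_set_def edges_within_def using assms(1)
    by (subst card_Un_disjoint) (auto simp: head_def tail_def split: if_splits)
  finally have "int (\<Sum>v\<in>X. indeg E ends D v) =
      int (indeg_set V E ends D X) + int (card (edges_within E ends X))"
    by simp
  then show ?thesis by simp
qed

lemma indeg_set_exchange:
  assumes "finite V" "finite E" "\<forall>e\<in>E. fst (ends e) \<in> V \<and> snd (ends e) \<in> V"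
    and "T \<subseteq> V" "Z \<subseteq> V"
  shows "int (indeg_set V E ends D T) + (\<Sum>v\<in>Z-T. int (indeg E ends D v))
      + int (card (edges_within E ends T)) =
    int (indeg_set V E ends D Z) + (\<Sum>v\<in>T-Z. int (indeg E ends D v))
      + int (card (edges_within E ends Z))"
proof -
  have "finite T" "finite Z" using assms finite_subset by blast+
  have "(\<Sum>v\<in>T. int (indeg E ends D v)) =
      (\<Sum>v\<in>T\<inter>Z. int (indeg E ends D v)) + (\<Sum>v\<in>T-Z. int (indeg E ends D v))"
    using \<open>finite T\<close> by (rule sum.Int_Diff)
  moreover have "(\<Sum>v\<in>Z. int (indeg E ends D v)) =
      (\<Sum>v\<in>T\<inter>Z. int (indeg E ends D v)) + (\<Sum>v\<in>Z-T. int (indeg E ends D v))"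
    using \<open>finite Z\<close> by (subst Int_commute) (rule sum.Int_Diff)
  ultimately show ?thesis
    using indeg_set_eq_sum_indeg[OF assms(2,3,4) \<open>finite T\<close>, of D]
      indeg_set_eq_sum_indeg[OF assms(2,3,5) \<open>finite Z\<close>, of D]
    by simp
qed

lemma indeg_set_ancestors_eq_0:
  "indeg_set V E ends D {v\<in>V. \<exists>a\<in>A. (arc E ends D)\<^sup>*\<^sup>* v a} = 0"
proof -
  let ?Z = "{v\<in>V. \<exists>a\<in>A. (arc E ends D)\<^sup>*\<^sup>* v a}"
  have "tail ends D e \<in> ?Z" if "e \<in> E" "head ends D e \<in> ?Z" "tail ends D e \<in> V" for e
  proof -
    have "arc E ends D (tail ends D e) (head ends D e)"
      using that(1) unfolding arc_def by blast
    with that(2,3) show ?thesis by (blast intro: converse_rtranclp_into_rtranclp)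
  qed
  then show ?thesis unfolding indeg_set_def by (auto simp: card_eq_0_iff)
qed

lemma min_indeg_orientation_saturated:
  assumes "finite V" "finite E" "\<forall>e\<in>E. fst (ends e) \<in> V \<and> snd (ends e) \<in> V" "T \<subseteq> V"
    and opt: "min_indeg_orientation V E ends f g T D"
    and "v \<in> V - T" "a \<in> T" "(arc E ends D)\<^sup>*\<^sup>* v a" "int (indeg E ends D a) > f a"
  shows "int (indeg E ends D v) \<ge> g v"
proof (rule ccontr)
  assume "\<not> int (indeg E ends D v) \<ge> g v"
  have "finite T" using assms(1,4) finite_subset by blast
  have "v \<noteq> a" using assms(6,7) by blast
  obtain D' where D': "\<And>w. int (indeg E ends D' w) =
      int (indeg E ends D w) + of_bool (w = v) - of_bool (w = a)"
    using indeg_reverse_path[OF assms(2,8)] by blast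
  have "bounded_orientation V E ends f g D'"
    using opt \<open>\<not> int (indeg E ends D v) \<ge> g v\<close> assms(9) \<open>v \<noteq> a\<close>
    unfolding min_indeg_orientation_def bounded_orientation_def D' by auto
  then have "indeg_set V E ends D T \<le> indeg_set V E ends D' T"
    using opt unfolding min_indeg_orientation_def by blast
  moreover have "(\<Sum>w\<in>T. int (indeg E ends D' w)) = (\<Sum>w\<in>T. int (indeg E ends D w)) - 1"
    using assms(6,7) \<open>finite T\<close> by (simp add: D' sum.distrib sum_subtractf)
  then have "int (indeg_set V E ends D' T) = int (indeg_set V E ends D T) - 1"
    using indeg_set_eq_sum_indeg[OF assms(2-4) \<open>finite T\<close>] by simp
  ultimately show False by simp
qed

lemma min_indeg_orientation_tight_set:
  assumes "finite V" "finite E" "\<forall>e\<in>E. fst (ends e) \<in> V \<and> snd (ends e) \<in> V" "T \<subseteq> V"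
    and opt: "min_indeg_orientation V E ends f g T D"
  obtains Z where "Z \<subseteq> V" "indeg_set V E ends D Z = 0"
    "\<forall>v\<in>Z-T. int (indeg E ends D v) = g v" "\<forall>v\<in>T-Z. int (indeg E ends D v) = f v"
proof
  define A where "A = {t\<in>T. int (indeg E ends D t) > f t}"
  define Z where "Z = {v\<in>V. \<exists>a\<in>A. (arc E ends D)\<^sup>*\<^sup>* v a}"
  have bounded: "bounded_orientation V E ends f g D"
    using opt unfolding min_indeg_orientation_def by blast
  show "Z \<subseteq> V" unfolding Z_def by blast
  show "indeg_set V E ends D Z = 0"
    unfolding Z_def by (rule indeg_set_ancestors_eq_0)
  show "\<forall>v\<in>Z-T. int (indeg E ends D v) = g v"
    using min_indeg_orientation_saturated[OF assms] bounded
    unfolding Z_def A_def bounded_orientation_def by force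
  show "\<forall>v\<in>T-Z. int (indeg E ends D v) = f v"
    using bounded assms(4) unfolding Z_def A_def bounded_orientation_def by force
qed

lemma indeg_slack_nonneg:
  assumes "T \<subseteq> V" "Z \<subseteq> V" "bounded_orientation V E ends f g D"
  shows "indeg_slack V E ends f g T Z D \<ge> 0"
  using assms unfolding indeg_slack_def bounded_orientation_def
  by (intro add_nonneg_nonneg sum_nonneg) auto

lemma indeg_set_minus_slack_invariant:
  assumes "finite V" "finite E" "\<forall>e\<in>E. fst (ends e) \<in> V \<and> snd (ends e) \<in> V"
    and "T \<subseteq> V" "Z \<subseteq> V"
  shows "int (indeg_set V E ends D T) - indeg_slack V E ends f g T Z D =
    int (indeg_set V E ends D' T) - indeg_slack V E ends f g T Z D'"
  using indeg_set_exchange[OF assms, of D] indeg_set_exchange[OF assms, of D']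
  unfolding indeg_slack_def by (simp add: sum_subtractf)

lemma indeg_slack_eq_0_iff:
  assumes "finite V" "T \<subseteq> V" "Z \<subseteq> V" "\<forall>v\<in>V. f v \<le> g v"
  shows "bounded_orientation V E ends f g D \<and> indeg_slack V E ends f g T Z D = 0 \<longleftrightarrow>
    bounded_orientation V E ends (tight_lower f g T Z) (tight_upper f g T Z) D \<and>
    indeg_set V E ends D Z = 0"
proof -
  have "finite (Z - T)" "finite (T - Z)"
    using assms(1-3) finite_subset by blast+
  have "indeg_slack V E ends f g T Z D = 0 \<longleftrightarrow> indeg_set V E ends D Z = 0 \<and>
      (\<forall>v\<in>Z-T. int (indeg E ends D v) = g v) \<and> (\<forall>v\<in>T-Z. int (indeg E ends D v) = f v)"
    if bounded: "bounded_orientation V E ends f g D"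
  proof -
    have upper: "\<forall>v\<in>Z-T. g v - int (indeg E ends D v) \<ge> 0"
      and lower: "\<forall>v\<in>T-Z. int (indeg E ends D v) - f v \<ge> 0"
      using bounded assms(2,3) unfolding bounded_orientation_def by auto
    have "(\<Sum>v\<in>Z-T. g v - int (indeg E ends D v)) = 0 \<longleftrightarrow> (\<forall>v\<in>Z-T. int (indeg E ends D v) = g v)"
      using upper \<open>finite (Z - T)\<close> by (subst sum_nonneg_eq_0_iff) auto
    moreover have "(\<Sum>v\<in>T-Z. int (indeg E ends D v) - f v) = 0 \<longleftrightarrow> (\<forall>v\<in>T-Z. int (indeg E ends D v) = f v)"
      using lower \<open>finite (T - Z)\<close> by (subst sum_nonneg_eq_0_iff) auto
    moreover have "(\<Sum>v\<in>Z-T. g v - int (indeg E ends D v)) \<ge> 0"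
      "(\<Sum>v\<in>T-Z. int (indeg E ends D v) - f v) \<ge> 0"
      using upper lower by (auto intro: sum_nonneg)
    ultimately show ?thesis unfolding indeg_slack_def by linarith
  qed
  moreover have "bounded_orientation V E ends f g D \<and> indeg_set V E ends D Z = 0 \<and>
      (\<forall>v\<in>Z-T. int (indeg E ends D v) = g v) \<and> (\<forall>v\<in>T-Z. int (indeg E ends D v) = f v) \<longleftrightarrow>
    bounded_orientation V E ends (tight_lower f g T Z) (tight_upper f g T Z) D \<and>
    indeg_set V E ends D Z = 0"
  proof -
    have "tight_lower f g T Z v \<le> n \<and> n \<le> tight_upper f g T Z v \<longleftrightarrow>
        f v \<le> n \<and> n \<le> g v \<and> (v \<in> Z - T \<longrightarrow> n = g v) \<and> (v \<in> T - Z \<longrightarrow> n = f v)"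
      if "f v \<le> g v" for v and n :: int
      using that unfolding tight_lower_def tight_upper_def by auto
    then show ?thesis
      using assms(2-4) unfolding bounded_orientation_def by blast
  qed
  ultimately show ?thesis by blast
qed

lemma min_indeg_orientation_iff_slack_eq_0:
  assumes "finite V" "finite E" "\<forall>e\<in>E. fst (ends e) \<in> V \<and> snd (ends e) \<in> V"
    and "T \<subseteq> V" "Z \<subseteq> V"
    and D0: "bounded_orientation V E ends f g D0" "indeg_slack V E ends f g T Z D0 = 0"
  shows "min_indeg_orientation V E ends f g T D \<longleftrightarrow>
    bounded_orientation V E ends f g D \<and> indeg_slack V E ends f g T Z D = 0"
proof safe
  assume "min_indeg_orientation V E ends f g T D"
  then have bounded: "bounded_orientation V E ends f g D"
    and "indeg_set V E ends D T \<le> indeg_set V E ends D0 T"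
    using D0(1) unfolding min_indeg_orientation_def by blast+
  then show "indeg_slack V E ends f g T Z D = 0"
    using indeg_set_minus_slack_invariant[OF assms(1-5), where D = D and D' = D0 and f = f and g = g]
      D0(2) indeg_slack_nonneg[OF assms(4,5) bounded]
    by linarith
  show "bounded_orientation V E ends f g D" by fact
next
  assume bounded: "bounded_orientation V E ends f g D"
    and "indeg_slack V E ends f g T Z D = 0"
  have "indeg_set V E ends D T \<le> indeg_set V E ends D' T"
    if "bounded_orientation V E ends f g D'" for D'
  proof -
    have "int (indeg_set V E ends D T) = int (indeg_set V E ends D0 T)"
      using indeg_set_minus_slack_invariant[OF assms(1-5), where D = D and D' = D0 and f = f and g = g]
        \<open>indeg_slack V E ends f g T Z D = 0\<close> D0(2)
      by linarith
    also have "\<dots> \<le> int (indeg_set V E ends D' T)"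
      using indeg_set_minus_slack_invariant[OF assms(1-5), where D = D' and D' = D0 and f = f and g = g]
        D0(2) indeg_slack_nonneg[OF assms(4,5) that]
      by linarith
    finally show ?thesis by simp
  qed
  with bounded show "min_indeg_orientation V E ends f g T D"
    unfolding min_indeg_orientation_def by blast
qed

theorem corollary5p12:
  fixes V :: "'v set" and E :: "'e set" and ends :: "'e \<Rightarrow> 'v \<times> 'v"
    and f g :: "'v \<Rightarrow> int" and T :: "'v set"
  assumes "finite V" and "finite E"
    and "\<forall>e\<in>E. fst (ends e) \<in> V \<and> snd (ends e) \<in> V"
    and "\<forall>v\<in>V. f v \<le> g v"
    and "\<exists>D. bounded_orientation V E ends f g D"
    and "T \<subseteq> V"
  shows "\<exists>f' g' :: 'v \<Rightarrow> int. \<exists>X\<^sub>T.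
    (\<forall>v\<in>V. f v \<le> f' v \<and> f' v \<le> g' v \<and> g' v \<le> g v) \<and> X\<^sub>T \<subseteq> V \<and>
    (\<forall>D. (bounded_orientation V E ends f g D \<and>
          (\<forall>D'. bounded_orientation V E ends f g D' \<longrightarrow>
                 indeg_set V E ends D T \<le> indeg_set V E ends D' T))
        \<longleftrightarrow> (bounded_orientation V E ends f' g' D \<and> indeg_set V E ends D X\<^sub>T = 0))"
proof -
  obtain D0 where opt: "min_indeg_orientation V E ends f g T D0"
    using assms(5) ex_has_least_nat[of "bounded_orientation V E ends f g" _ "\<lambda>D. indeg_set V E ends D T"]
    unfolding min_indeg_orientation_def by blast
  then obtain Z where "Z \<subseteq> V" "indeg_set V E ends D0 Z = 0"
    "\<forall>v\<in>Z-T. int (indeg E ends D0 v) = g v" "\<forall>v\<in>T-Z. int (indeg E ends D0 v) = f v"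
    using min_indeg_orientation_tight_set[OF assms(1-3,6)] by blast
  then have "indeg_slack V E ends f g T Z D0 = 0" by (simp add: indeg_slack_def)
  then have "min_indeg_orientation V E ends f g T D \<longleftrightarrow>
      bounded_orientation V E ends (tight_lower f g T Z) (tight_upper f g T Z) D \<and>
      indeg_set V E ends D Z = 0" for D
    using opt min_indeg_orientation_iff_slack_eq_0[OF assms(1-3,6) \<open>Z \<subseteq> V\<close>]
      indeg_slack_eq_0_iff[OF assms(1,6) \<open>Z \<subseteq> V\<close> assms(4)]
    unfolding min_indeg_orientation_def by blast
  moreover have "\<forall>v\<in>V. f v \<le> tight_lower f g T Z v \<and>
      tight_lower f g T Z v \<le> tight_upper f g T Z v \<and> tight_upper f g T Z v \<le> g v"
    using assms(4) unfolding tight_lower_def tight_upper_def by auto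
  ultimately show ?thesis
    using \<open>Z \<subseteq> V\<close> unfolding min_indeg_orientation_def by blast
qed

end
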